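(* Let $M$ be a finite set of items and $\preceq$ a monotone preference over $2^M$. If $\preceq$ satisfies satiation-only-at-the-top (in particular, if it satisfies non-satiation), then $\preceq$ can be represented by a submodular valuation. Consequently, the class of monotone preferences representable by a submodular valuation equals the class of monotone preferences satisfying satiation-only-at-the-top.
   Context: A monotone preference $\preceq$ is a complete and transitive weak order on $2^M$ with $S\preceq T$ whenever $S\subseteq T$; $S\prec T$ means $S\preceq T$ and not $T\preceq S$, and $S=T$ in preference means both $S\preceq T$ and $T\preceq S$. $\preceq$ satisfies non-satiation if $T\prec T\cup\{j\}$ for every $T$ and $j\notin T$. It satisfies satiation-only-at-the-top if for all sets $T\subset S$ and every item $j\notin S$: if $T$ and $T\cup\{j\}$ are indifferent, then $S$ and $S\cup\{j\}$ are indifferent. A valuation $v:2^M\to\mathbb R_{\ge0}$ with $v(\emptyset)=0$ represents $\preceq$ if $S\preceq T\iff v(S)\le v(T)$ and $S\prec T\iff v(S)<v(T)$; $v$ is submodular if $v(S)+v(T)\ge v(S\cup T)+v(S\cap T)$ for all $S,T$. *)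

theory Defs
  imports Complex_Main
begin

text \<open>A preference on the subsets of the item set M is a binary relation
  pref S T meaning "S is weakly worse than T", considered on Pow M.\<close>

definition strict_pref :: "('a set \<Rightarrow> 'a set \<Rightarrow> bool) \<Rightarrow> 'a set \<Rightarrow> 'a set \<Rightarrow> bool" where
  "strict_pref pref S T \<longleftrightarrow> pref S T \<and> \<not> pref T S"

definition indiff :: "('a set \<Rightarrow> 'a set \<Rightarrow> bool) \<Rightarrow> 'a set \<Rightarrow> 'a set \<Rightarrow> bool" where
  "indiff pref S T \<longleftrightarrow> pref S T \<and> pref T S"

definition monotone_pref :: "'a set \<Rightarrow> ('a set \<Rightarrow> 'a set \<Rightarrow> bool) \<Rightarrow> bool" where
  "monotone_pref M pref \<longleftrightarrow>
     (\<forall>S\<subseteq>M. \<forall>T\<subseteq>M. pref S T \<or> pref T S) \<and>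
     (\<forall>S\<subseteq>M. \<forall>T\<subseteq>M. \<forall>U\<subseteq>M. pref S T \<longrightarrow> pref T U \<longrightarrow> pref S U) \<and>
     (\<forall>S T. S \<subseteq> T \<longrightarrow> T \<subseteq> M \<longrightarrow> pref S T)"

definition non_satiation :: "'a set \<Rightarrow> ('a set \<Rightarrow> 'a set \<Rightarrow> bool) \<Rightarrow> bool" where
  "non_satiation M pref \<longleftrightarrow>
     (\<forall>T\<subseteq>M. \<forall>j\<in>M - T. strict_pref pref T (insert j T))"

definition satiation_only_at_top :: "'a set \<Rightarrow> ('a set \<Rightarrow> 'a set \<Rightarrow> bool) \<Rightarrow> bool" where
  "satiation_only_at_top M pref \<longleftrightarrow>
     (\<forall>S\<subseteq>M. \<forall>T. T \<subset> S \<longrightarrow> (\<forall>j\<in>M - S.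
        indiff pref T (insert j T) \<longrightarrow> indiff pref S (insert j S)))"

definition represents :: "'a set \<Rightarrow> ('a set \<Rightarrow> real) \<Rightarrow> ('a set \<Rightarrow> 'a set \<Rightarrow> bool) \<Rightarrow> bool" where
  "represents M v pref \<longleftrightarrow>
     v {} = 0 \<and> (\<forall>S\<subseteq>M. v S \<ge> 0) \<and>
     (\<forall>S\<subseteq>M. \<forall>T\<subseteq>M. (pref S T \<longleftrightarrow> v S \<le> v T) \<and> (strict_pref pref S T \<longleftrightarrow> v S < v T))"

definition submodular_on :: "'a set \<Rightarrow> ('a set \<Rightarrow> real) \<Rightarrow> bool" where
  "submodular_on M v \<longleftrightarrow>
     (\<forall>S\<subseteq>M. \<forall>T\<subseteq>M. v S + v T \<ge> v (S \<union> T) + v (S \<inter> T))"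

end

theory Submission
  imports Defs
begin

text \<open>Rank every bundle S by the number r S of bundles strictly worse than S and put
  v S = 1 - 2 ^ (- r S); then v represents the preference. The geometric scale makes v
  submodular as soon as, for r S \<le> r T, a strict gain r T < r (S \<union> T) forces a strict loss
  r (S \<inter> T) < r S: one halving step on the small side then outweighs any gain on the large
  side. Satiation-only-at-the-top supplies exactly this: if S \<inter> T and S were indifferent,
  adding the items of S - T one at a time would be indifferent on top of S \<inter> T, hence on top
  of the larger set T, and so T and S \<union> T would be indifferent. Conversely, submodularity of
  a representing valuation transports a zero marginal value from T up to any S \<supset> T.\<close>

lemma half_power_exchange:
  fixes a b c d :: nat
  assumes "d \<le> a" "a \<le> b" "b \<le> c" and "c = b \<or> d < a"
  shows "(1/2::real) ^ a + (1/2) ^ b \<le> (1/2) ^ c + (1/2) ^ d"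
  using assms(4)
proof
  assume "c = b"
  moreover have "(1/2::real) ^ a \<le> (1/2) ^ d"
    using assms(1) by (rule power_decreasing) simp_all
  ultimately show ?thesis by simp
next
  assume "d < a"
  have "(1/2::real) ^ a + (1/2) ^ b \<le> 2 * (1/2) ^ a"
    using power_decreasing[OF assms(2), of "1/2::real"] by simp
  also have "\<dots> = (1/2) ^ (a - 1)"
    using \<open>d < a\<close> by (cases a) auto
  also have "\<dots> \<le> (1/2) ^ d"
    using \<open>d < a\<close> by (intro power_decreasing) simp_all
  finally show ?thesis
    using zero_le_power[of "1/2::real" c] by linarith
qed

lemma submodular_on_geometric_rank:
  fixes r :: "'a set \<Rightarrow> nat"
  assumes mono: "\<And>S T. S \<subseteq> T \<Longrightarrow> T \<subseteq> M \<Longrightarrow> r S \<le> r T"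
    and exchange: "\<And>S T. S \<subseteq> M \<Longrightarrow> T \<subseteq> M \<Longrightarrow> r S \<le> r T \<Longrightarrow> r T < r (S \<union> T)
                      \<Longrightarrow> r (S \<inter> T) < r S"
  shows "submodular_on M (\<lambda>S. 1 - (1/2) ^ r S)"
proof -
  have ineq: "(1/2::real) ^ r S + (1/2) ^ r T \<le> (1/2) ^ r (S \<union> T) + (1/2) ^ r (S \<inter> T)"
    if "S \<subseteq> M" "T \<subseteq> M" "r S \<le> r T" for S T
  proof (rule half_power_exchange)
    show "r (S \<inter> T) \<le> r S" "r T \<le> r (S \<union> T)"
      using that by (auto intro: mono)
    then show "r (S \<union> T) = r T \<or> r (S \<inter> T) < r S"
      using exchange[OF that] by linarith
  qed fact
  show ?thesis
    unfolding submodular_on_def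
  proof (intro allI impI)
    fix S T assume "S \<subseteq> M" "T \<subseteq> M"
    then show "1 - (1/2) ^ r (S \<union> T) + (1 - (1/2) ^ r (S \<inter> T))
               \<le> 1 - (1/2) ^ r S + (1 - (1/2::real) ^ r T)"
      using ineq[of S T] ineq[of T S] by (cases "r S \<le> r T") (auto simp: Un_commute Int_commute)
  qed
qed

lemma satiation_only_at_topD:
  "satiation_only_at_top M pref \<Longrightarrow> S \<subseteq> M \<Longrightarrow> T \<subset> S \<Longrightarrow> j \<in> M - S \<Longrightarrow>
   indiff pref T (insert j T) \<Longrightarrow> indiff pref S (insert j S)"
  unfolding satiation_only_at_top_def by blast

lemma non_satiation_imp_satiation_only_at_top:
  assumes "non_satiation M pref"
  shows "satiation_only_at_top M pref"
  unfolding satiation_only_at_top_def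
proof (intro allI impI ballI)
  fix S T j assume "S \<subseteq> M" "T \<subset> S" "j \<in> M - S" "indiff pref T (insert j T)"
  moreover have "strict_pref pref T (insert j T)"
    using assms \<open>S \<subseteq> M\<close> \<open>T \<subset> S\<close> \<open>j \<in> M - S\<close> unfolding non_satiation_def by blast
  ultimately show "indiff pref S (insert j S)"
    unfolding strict_pref_def indiff_def by blast
qed

context
  fixes M :: "'a set" and pref :: "'a set \<Rightarrow> 'a set \<Rightarrow> bool"
  assumes mp: "monotone_pref M pref"
begin

lemma monotone_pref_total: "S \<subseteq> M \<Longrightarrow> T \<subseteq> M \<Longrightarrow> pref S T \<or> pref T S"
  using mp[unfolded monotone_pref_def, THEN conjunct1] by blast

lemma monotone_pref_trans:
  "S \<subseteq> M \<Longrightarrow> T \<subseteq> M \<Longrightarrow> U \<subseteq> M \<Longrightarrow> pref S T \<Longrightarrow> pref T U \<Longrightarrow> pref S U"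
  using mp[unfolded monotone_pref_def, THEN conjunct2, THEN conjunct1] by blast

lemma monotone_pref_mono: "S \<subseteq> T \<Longrightarrow> T \<subseteq> M \<Longrightarrow> pref S T"
  using mp[unfolded monotone_pref_def, THEN conjunct2, THEN conjunct2] by blast

lemma indiff_trans:
  "S \<subseteq> M \<Longrightarrow> T \<subseteq> M \<Longrightarrow> U \<subseteq> M \<Longrightarrow> indiff pref S T \<Longrightarrow> indiff pref T U \<Longrightarrow> indiff pref S U"
  unfolding indiff_def by (meson monotone_pref_trans)

lemma indiff_between:
  assumes "S \<subseteq> T" "T \<subseteq> U" "U \<subseteq> M" and "indiff pref S U"
  shows "indiff pref S T" "indiff pref T U"
  using assms monotone_pref_mono[of S T] monotone_pref_mono[of T U]
    monotone_pref_trans[of U S T] monotone_pref_trans[of T U S]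
  unfolding indiff_def by (meson order_trans)+

lemma indiff_union_propagate:
  assumes soat: "satiation_only_at_top M pref" and "finite D"
  shows "D \<subseteq> M \<Longrightarrow> A \<subset> B \<Longrightarrow> B \<subseteq> M \<Longrightarrow> D \<inter> B = {} \<Longrightarrow>
         indiff pref A (A \<union> D) \<Longrightarrow> indiff pref B (B \<union> D)"
  using \<open>finite D\<close>
proof (induction D rule: finite_induct)
  case empty
  then show ?case
    using monotone_pref_mono[of B B] unfolding indiff_def by simp
next
  case (insert j D)
  have subsets: "B \<subseteq> M" "B \<union> D \<subseteq> M" "insert j (B \<union> D) \<subseteq> M"
    using insert.prems(1,3) by auto
  have "A \<union> D \<subseteq> insert j (A \<union> D)" "insert j (A \<union> D) \<subseteq> M"
    using insert.prems by auto
  moreover have "indiff pref A (insert j (A \<union> D))"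
    using insert.prems(5) by simp
  ultimately have "indiff pref A (A \<union> D)" "indiff pref (A \<union> D) (insert j (A \<union> D))"
    using indiff_between[of A "A \<union> D" "insert j (A \<union> D)"] by auto
  have "indiff pref B (B \<union> D)"
    using insert.prems(1,4)
    by (intro insert.IH[OF _ insert.prems(2,3) _ \<open>indiff pref A (A \<union> D)\<close>]) auto
  moreover have "indiff pref (B \<union> D) (insert j (B \<union> D))"
  proof (rule satiation_only_at_topD[OF soat])
    show "A \<union> D \<subset> B \<union> D" "j \<in> M - (B \<union> D)"
      using insert.hyps(2) insert.prems(1-4) by auto
  qed fact+
  ultimately have "indiff pref B (insert j (B \<union> D))"
    using subsets indiff_trans by blast
  then show ?case
    by simp
qed

lemma submodular_representation_imp_satiation_only_at_top:
  assumes rep: "represents M v pref" and sub: "submodular_on M v"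
  shows "satiation_only_at_top M pref"
  unfolding satiation_only_at_top_def
proof (intro allI impI ballI)
  fix S T j assume "S \<subseteq> M" "T \<subset> S" "j \<in> M - S" and ind: "indiff pref T (insert j T)"
  then have sets: "T \<subseteq> M" "insert j T \<subseteq> M" "insert j S \<subseteq> M"
    "insert j T \<union> S = insert j S" "insert j T \<inter> S = T"
    by auto
  have pref_iff: "\<And>X Y. X \<subseteq> M \<Longrightarrow> Y \<subseteq> M \<Longrightarrow> pref X Y \<longleftrightarrow> v X \<le> v Y"
    using rep unfolding represents_def by blast
  have "v (insert j T) = v T"
    using ind sets pref_iff unfolding indiff_def by (meson order_antisym)
  moreover have "v (insert j T \<union> S) + v (insert j T \<inter> S) \<le> v (insert j T) + v S"
    using sub sets \<open>S \<subseteq> M\<close> unfolding submodular_on_def by blast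
  ultimately have "v (insert j S) \<le> v S"
    using sets by simp
  then show "indiff pref S (insert j S)"
    using monotone_pref_mono[of S "insert j S"] pref_iff \<open>S \<subseteq> M\<close> sets
    unfolding indiff_def by blast
qed

definition pref_rank :: "'a set \<Rightarrow> nat" where
  "pref_rank S = card {U. U \<subseteq> M \<and> strict_pref pref U S}"

context
  assumes "finite M"
begin

lemma finite_strict_lower_set: "finite {U. U \<subseteq> M \<and> strict_pref pref U S}"
  by (rule finite_subset[of _ "Pow M"]) (use \<open>finite M\<close> in auto)

lemma strict_lower_set_mono:
  assumes "S \<subseteq> M" "T \<subseteq> M" "pref S T"
  shows "{U. U \<subseteq> M \<and> strict_pref pref U S} \<subseteq> {U. U \<subseteq> M \<and> strict_pref pref U T}"
  using assms monotone_pref_trans unfolding strict_pref_def by blast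

lemma pref_rank_mono: "S \<subseteq> M \<Longrightarrow> T \<subseteq> M \<Longrightarrow> pref S T \<Longrightarrow> pref_rank S \<le> pref_rank T"
  unfolding pref_rank_def by (intro card_mono finite_strict_lower_set strict_lower_set_mono)

lemma pref_rank_strict_mono:
  assumes "S \<subseteq> M" "T \<subseteq> M" "strict_pref pref S T"
  shows "pref_rank S < pref_rank T"
proof -
  have "{U. U \<subseteq> M \<and> strict_pref pref U S} \<subset> {U. U \<subseteq> M \<and> strict_pref pref U T}"
    using assms strict_lower_set_mono[of S T] unfolding strict_pref_def by blast
  then show ?thesis
    unfolding pref_rank_def by (intro psubset_card_mono finite_strict_lower_set)
qed

lemma pref_iff_pref_rank_le:
  "S \<subseteq> M \<Longrightarrow> T \<subseteq> M \<Longrightarrow> pref S T \<longleftrightarrow> pref_rank S \<le> pref_rank T"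
  using pref_rank_mono pref_rank_strict_mono[of T S] monotone_pref_total[of S T]
  unfolding strict_pref_def by force

lemma strict_pref_iff_pref_rank_less:
  "S \<subseteq> M \<Longrightarrow> T \<subseteq> M \<Longrightarrow> strict_pref pref S T \<longleftrightarrow> pref_rank S < pref_rank T"
  using pref_iff_pref_rank_le unfolding strict_pref_def by force

lemma pref_rank_empty: "pref_rank {} = 0"
proof -
  have "{U. U \<subseteq> M \<and> strict_pref pref U {}} = {}"
    using monotone_pref_mono[of "{}"] unfolding strict_pref_def by blast
  then show ?thesis
    unfolding pref_rank_def by (simp only: card.empty)
qed

lemma represents_geometric_pref_rank:
  "represents M (\<lambda>S. 1 - (1/2) ^ pref_rank S) pref"
  unfolding represents_def
  by (simp add: pref_rank_empty power_le_one pref_iff_pref_rank_le strict_pref_iff_pref_rank_less)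

lemma pref_rank_inter_less:
  assumes soat: "satiation_only_at_top M pref"
    and "S \<subseteq> M" "T \<subseteq> M" "pref_rank S \<le> pref_rank T" "pref_rank T < pref_rank (S \<union> T)"
  shows "pref_rank (S \<inter> T) < pref_rank S"
proof (rule ccontr)
  assume "\<not> pref_rank (S \<inter> T) < pref_rank S"
  then have "pref S (S \<inter> T)"
    using assms(2) pref_iff_pref_rank_le[of S "S \<inter> T"] by auto
  moreover have "pref (S \<inter> T) S"
    using assms(2) by (intro monotone_pref_mono) auto
  ultimately have inter_indiff: "indiff pref (S \<inter> T) ((S \<inter> T) \<union> (S - T))"
    unfolding indiff_def by (simp add: Int_Diff_Un)
  have "\<not> T \<subseteq> S"
  proof
    assume "T \<subseteq> S"
    then have "S \<union> T = S" by blast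
    with assms(4,5) show False by simp
  qed
  then have "S \<inter> T \<subset> T"
    by blast
  moreover have "finite (S - T)" "S - T \<subseteq> M" "(S - T) \<inter> T = {}"
    using \<open>finite M\<close> assms(2) by (auto intro: finite_subset)
  ultimately have "indiff pref T (T \<union> (S - T))"
    using indiff_union_propagate[OF soat _ _ _ assms(3) _ inter_indiff] by blast
  then show False
    using assms(2,3,5) pref_iff_pref_rank_le[of "S \<union> T" T] unfolding indiff_def
    by (simp add: Un_commute)
qed

lemma satiation_only_at_top_imp_submodular_representation:
  assumes "satiation_only_at_top M pref"
  shows "\<exists>v. represents M v pref \<and> submodular_on M v"
proof (intro exI conjI)
  show "represents M (\<lambda>S. 1 - (1/2) ^ pref_rank S) pref"
    by (rule represents_geometric_pref_rank)
  show "submodular_on M (\<lambda>S. 1 - (1/2) ^ pref_rank S)"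
  proof (rule submodular_on_geometric_rank)
    fix S T assume "S \<subseteq> T" "T \<subseteq> M"
    then show "pref_rank S \<le> pref_rank T"
      by (intro pref_rank_mono monotone_pref_mono) auto
  qed (rule pref_rank_inter_less[OF assms])
qed

end

end

theorem mainTheorem9:
  fixes M :: "'a set" and pref :: "'a set \<Rightarrow> 'a set \<Rightarrow> bool"
  assumes "finite M" and "monotone_pref M pref"
  shows "(satiation_only_at_top M pref \<longrightarrow> (\<exists>v. represents M v pref \<and> submodular_on M v))
       \<and> (non_satiation M pref \<longrightarrow> (\<exists>v. represents M v pref \<and> submodular_on M v))
       \<and> ((\<exists>v. represents M v pref \<and> submodular_on M v) \<longleftrightarrow> satiation_only_at_top M pref)"
  using satiation_only_at_top_imp_submodular_representation[OF assms(2,1)]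
    non_satiation_imp_satiation_only_at_top
    submodular_representation_imp_satiation_only_at_top[OF assms(2)]
  by blast

end
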